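(* Let $G$ be a torsion-free locally compact abelian group and let $G^{*}$ be its minimal divisible extension. Then $G_{op}\subseteq G^{*}_{op}$.
   Context: A subgroup $H$ of an abelian group $G$ is pure if $nH=H\cap nG$ for every positive integer $n$. For an LCA group $G$, $G_{op}$ denotes the intersection of all open pure subgroups of $G$. For an LCA group $G$, $G^{*}$ denotes the minimal divisible extension (divisible hull) of $G$, topologized as an LCA group containing $G$ as an open subgroup (as in Hewitt–Ross 4.18.h); for torsion-free $G$, $G^{*}$ is torsion-free. *)

theory Defs
  imports "HOL-Analysis.Analysis"
begin

text \<open>An LCA group is modelled as a type of class topological_ab_group_add
  (abelian group with continuous addition and negation) that is Hausdorff
  (class t2_space) and locally compact.\<close>

definition LCA_group :: "'a::{topological_ab_group_add, t2_space} itself \<Rightarrow> bool" where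
  "LCA_group _ \<longleftrightarrow> locally_compact_space (euclidean :: 'a topology)"

definition nmult :: "nat \<Rightarrow> 'a::comm_monoid_add \<Rightarrow> 'a" where
  "nmult n x = (\<Sum>_<n. x)"

definition is_subgroup :: "'a::ab_group_add set \<Rightarrow> bool" where
  "is_subgroup H \<longleftrightarrow> 0 \<in> H \<and> (\<forall>x\<in>H. \<forall>y\<in>H. x + y \<in> H) \<and> (\<forall>x\<in>H. - x \<in> H)"

definition pure_subgroup :: "'a::ab_group_add set \<Rightarrow> bool" where
  "pure_subgroup H \<longleftrightarrow> is_subgroup H \<and>
     (\<forall>n>0. nmult n ` H = H \<inter> range (nmult n))"

definition G_op :: "'a::{topological_ab_group_add} set" where
  "G_op = \<Inter> {H. open H \<and> pure_subgroup H}"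

definition torsion_free :: "'a::ab_group_add itself \<Rightarrow> bool" where
  "torsion_free _ \<longleftrightarrow> (\<forall>(x::'a) n. n > 0 \<longrightarrow> nmult n x = 0 \<longrightarrow> x = 0)"

definition divisible :: "'a::ab_group_add itself \<Rightarrow> bool" where
  "divisible _ \<longleftrightarrow> (\<forall>(y::'a) n. n > 0 \<longrightarrow> (\<exists>z. nmult n z = y))"

definition additive_hom :: "('a::ab_group_add \<Rightarrow> 'b::ab_group_add) \<Rightarrow> bool" where
  "additive_hom j \<longleftrightarrow> (\<forall>x y. j (x + y) = j x + j y)"

text \<open>j : G \<rightarrow> D exhibits D as a minimal divisible extension (divisible hull) of G,
  topologized so that G is an open subgroup of D (Hewitt-Ross 4.18.h):
  j is an injective homomorphism that is a homeomorphism onto an open subgroup,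
  D is divisible, and the extension is essential (every nonzero subgroup of D
  meets j(G) nontrivially), which characterizes minimality.\<close>
definition divisible_hull ::
  "('a::{topological_ab_group_add, t2_space} \<Rightarrow> 'b::{topological_ab_group_add, t2_space}) \<Rightarrow> bool" where
  "divisible_hull j \<longleftrightarrow>
     additive_hom j \<and> inj j \<and> continuous_on UNIV j \<and>
     (\<forall>U. open U \<longrightarrow> open (j ` U)) \<and>
     divisible TYPE('b) \<and>
     (\<forall>K. is_subgroup K \<and> K \<noteq> {0} \<longrightarrow> K \<inter> range j \<noteq> {0})"

end

theory Submission
  imports Defs
begin

text \<open>The preimage under the embedding of an open pure subgroup of the hull is an open pure
  subgroup of the original group, because the embedding is a continuous homomorphism and the
  hull, as an essential extension of a torsion-free group, is torsion-free, so that
  \<open>n\<close>-th roots in it are unique. Hence \<open>G\<^sub>o\<^sub>p\<close> maps into every open pure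
  subgroup of the hull.\<close>

lemma additive_hom_iff_additive: "additive_hom j \<longleftrightarrow> Modules.additive j"
  by (simp add: additive_hom_def Modules.additive_def)

lemma nmult_add: "nmult n (x + y) = nmult n x + nmult n (y::'a::ab_group_add)"
  by (simp add: nmult_def sum.distrib)

lemma nmult_minus: "nmult n (- x) = - nmult n (x::'a::ab_group_add)"
  by (simp add: nmult_def sum_negf)

lemma nmult_diff: "nmult n (x - y) = nmult n x - nmult n (y::'a::ab_group_add)"
  by (simp add: nmult_def sum_subtractf)

lemma nmult_zero [simp]: "nmult n (0::'a::ab_group_add) = 0"
  by (simp add: nmult_def)

lemma (in additive) nmult: "f (nmult n x) = nmult n (f x)"
  by (simp add: nmult_def sum)

lemma torsion_free_iff_unique_roots:
  "torsion_free TYPE('a::ab_group_add) \<longleftrightarrow>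
     (\<forall>n (x::'a) y. n > 0 \<longrightarrow> nmult n x = nmult n y \<longrightarrow> x = y)"
  unfolding torsion_free_def
  by (metis diff_eq_eq diff_self nmult_diff add_0)

lemma is_subgroup_vimage:
  assumes "Modules.additive f" and "is_subgroup H"
  shows "is_subgroup (f -` H)"
  using assms by (simp add: is_subgroup_def additive.zero additive.add additive.minus)

lemma torsion_free_essential_extension:
  fixes j :: "'a::ab_group_add \<Rightarrow> 'b::ab_group_add"
  assumes j: "Modules.additive j" "inj j"
    and tf: "torsion_free TYPE('a)"
    and essential: "\<And>K. is_subgroup K \<Longrightarrow> K \<noteq> {0} \<Longrightarrow> K \<inter> range j \<noteq> {0}"
  shows "torsion_free TYPE('b)"
  unfolding torsion_free_def
proof (intro allI impI)
  fix z :: 'b and n :: nat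
  assume "n > 0" and "nmult n z = 0"
  define K where "K = {w::'b. nmult n w = 0}"
  have "is_subgroup K"
    by (simp add: K_def is_subgroup_def nmult_add nmult_minus)
  have "0 \<in> K \<inter> range j"
    using additive.zero[OF j(1)] by (auto simp: K_def intro: range_eqI[of 0 j 0])
  have "K \<inter> range j \<subseteq> {0}"
  proof
    fix w assume "w \<in> K \<inter> range j"
    then obtain g where "w = j g" and "nmult n (j g) = 0"
      by (auto simp: K_def)
    then have "j (nmult n g) = j 0"
      by (simp add: additive.nmult[OF j(1)] additive.zero[OF j(1)])
    then have "nmult n g = 0"
      using j(2) by (simp add: inj_eq)
    with \<open>n > 0\<close> tf have "g = 0"
      by (simp add: torsion_free_def)
    with \<open>w = j g\<close> show "w \<in> {0}"
      by (simp add: additive.zero[OF j(1)])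
  qed
  with \<open>0 \<in> K \<inter> range j\<close> essential[OF \<open>is_subgroup K\<close>] have "K = {0}"
    by blast
  with \<open>nmult n z = 0\<close> show "z = 0"
    by (auto simp: K_def)
qed

lemma pure_subgroup_vimage:
  fixes f :: "'a::ab_group_add \<Rightarrow> 'b::ab_group_add"
  assumes f: "Modules.additive f" and tf: "torsion_free TYPE('b)" and H: "pure_subgroup H"
  shows "pure_subgroup (f -` H)"
  unfolding pure_subgroup_def
proof (intro conjI allI impI)
  have roots: "nmult n ` H = H \<inter> range (nmult n)" if "n > 0" for n
    using H that by (simp add: pure_subgroup_def)
  show "is_subgroup (f -` H)"
    using H f by (simp add: pure_subgroup_def is_subgroup_vimage)
  fix n :: nat assume "n > 0"
  show "nmult n ` (f -` H) = f -` H \<inter> range (nmult n)"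
  proof
    show "nmult n ` (f -` H) \<subseteq> f -` H \<inter> range (nmult n)"
      using roots[OF \<open>n > 0\<close>] by (auto simp: additive.nmult[OF f])
  next
    show "f -` H \<inter> range (nmult n) \<subseteq> nmult n ` (f -` H)"
    proof
      fix w assume "w \<in> f -` H \<inter> range (nmult n)"
      then obtain v where "w = nmult n v" and "nmult n (f v) \<in> H"
        by (auto simp: additive.nmult[OF f])
      then obtain h where "h \<in> H" and "nmult n (f v) = nmult n h"
        using roots[OF \<open>n > 0\<close>] by force
      with \<open>n > 0\<close> tf have "f v = h"
        unfolding torsion_free_iff_unique_roots by blast
      with \<open>h \<in> H\<close> \<open>w = nmult n v\<close> show "w \<in> nmult n ` (f -` H)"
        by blast
    qed
  qed
qed

lemma G_op_image_subset:
  fixes f :: "'a::topological_ab_group_add \<Rightarrow> 'b::topological_ab_group_add"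
  assumes "Modules.additive f" and "continuous_on UNIV f" and "torsion_free TYPE('b)"
  shows "f ` G_op \<subseteq> G_op"
proof -
  have "f -` H \<in> {H. open H \<and> pure_subgroup H}"
    if "open H" and "pure_subgroup H" for H :: "'b set"
    using that assms by (simp add: open_vimage pure_subgroup_vimage)
  then show ?thesis
    by (auto simp: G_op_def)
qed

theorem corollary9:
  fixes j :: "'a::{topological_ab_group_add, t2_space} \<Rightarrow> 'b::{topological_ab_group_add, t2_space}"
  assumes "LCA_group TYPE('a)"
    and "torsion_free TYPE('a)"
    and "LCA_group TYPE('b)"
    and "divisible_hull j"
  shows "j ` (G_op :: 'a set) \<subseteq> (G_op :: 'b set)"
proof -
  have j: "Modules.additive j" "inj j" "continuous_on UNIV j"
    and essential: "\<And>K. is_subgroup K \<Longrightarrow> K \<noteq> {0} \<Longrightarrow> K \<inter> range j \<noteq> {0}"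
    using assms(4) by (auto simp: divisible_hull_def additive_hom_iff_additive)
  have "torsion_free TYPE('b)"
    using torsion_free_essential_extension[OF j(1,2) assms(2) essential] .
  then show ?thesis
    by (rule G_op_image_subset[OF j(1,3)])
qed

end
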